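(* Consider the linear model $Y=X\beta^0+\epsilon$ with $Y\in\mathbb{R}^n$, $X\in\mathbb{R}^{n\times p}$, $\beta^0\in\mathbb{R}^p$, and noise $\epsilon\in\mathbb{R}^n$ with i.i.d. entries of mean $0$ and variance $\sigma^2$. Let $\Omega$ be a norm on $\mathbb{R}^p$, $\lambda>0$, $\hat\beta$ a minimizer of $\beta\mapsto\|Y-X\beta\|_n+\lambda\Omega(\beta)$, $\hat\epsilon:=Y-X\hat\beta$, and let $f,\lambda^0$ be as in the context. Assume Assumption I (see context). Let $S\subseteq\{1,\dots,p\}$ be an allowed set for $\Omega$ with associated norm $\Omega^{S^c}$ (Assumption II), let $\beta\in\mathbb{R}^p$ with $\operatorname{supp}(\beta)\subseteq S$, and let $0\le\delta<1$. Assume $a\lambda^m<\lambda$ where $a=3(1+f)$. Define $$\lambda^*:=\lambda\,\frac{1-\frac{\lambda^0}{\lambda}(1+2f)}{f+2},\qquad \tilde\lambda:=\lambda(1+f),\qquad L_S:=\frac{\tilde\lambda+\lambda^m}{\lambda^*-\lambda^m}\cdot\frac{1+\delta}{1-\delta}.$$ Then $$\|X(\hat\beta-\beta^0)\|_n^2+2\delta\|\epsilon\|_n\Big[(\lambda^*+\lambda^m)\Omega(\hat\beta_S-\beta)+(\lambda^*-\lambda^m)\Omega^{S^c}(\hat\beta_{S^c})\Big]\le \|X(\beta-\beta^0)\|_n^2+\|\epsilon\|_n^2\big[(1+\delta)(\tilde\lambda+\lambda^m)\big]^2\,\Gamma_\Omega^2(L_S,S).$$ Moreover, for each allowed set $S$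 (with its norm $\Omega^{S^c}$ and its quantities $\lambda^m=\lambda^m(S)$, $L_S$) let $\beta_\star(S)$ be a minimizer, over $\beta$ with $\operatorname{supp}(\beta)\subseteq S$, of $\|X(\beta-\beta^0)\|_n^2+\|\epsilon\|_n^2[(1+\delta)(\tilde\lambda+\lambda^m(S))]^2\Gamma_\Omega^2(L_S,S)$; let $S_\star$ be a minimizer over allowed sets $S$ of $\|X(\beta_\star(S)-\beta^0)\|_n^2+\|\epsilon\|_n^2[(1+\delta)(\tilde\lambda+\lambda^m(S))]^2\Gamma_\Omega^2(L_S,S)$, and $\beta_\star:=\beta_\star(S_\star)$. If the hypotheses above hold with $S=S_\star$ (in particular $a\lambda^m(S_\star)<\lambda$), then, writing $\lambda^m=\lambda^m(S_\star)$, $$\|X(\hat\beta-\beta^0)\|_n^2\le\|X(\beta_\star-\beta^0)\|_n^2+\|\epsilon\|_n^2(1+\delta)^2(\tilde\lambda+\lambda^m)^2\,\Gamma_\Omega^2(L_{S_\star},S_\star),$$ and, if $\delta>0$, $$\Omega(\hat\beta_{S_\star}-\beta_\star)+\Omega^{S_\star^c}(\hat\beta_{S_\star^c})\le\frac{1}{2\delta\|\epsilon\|_n}\cdot\frac{\|X(\beta_\star-\beta^0)\|_n^2}{\lambda^*-\lambda^m}+\frac{(1+\delta)^2\|\epsilon\|_n}{2\delta}\cdot\frac{(\tilde\lambda+\lambda^m)^2}{\lambda^*-\lambda^m}\,\Gamma_\Omega^2(L_{S_\star},S_\star).$$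
   Context: For $a\in\mathbb{R}^n$, $\|a\|_n:=(\sum_{j=1}^n a_j^2/n)^{1/2}$. For a norm $N$, its dual is $N^*(x):=\max_{N(z)\le1}z^Tx$. For $S\subseteq\{1,\dots,p\}$ and $\beta\in\mathbb{R}^p$, $\beta_S$ denotes the restriction of $\beta$ to coordinates in $S$; when $\Omega$ (a norm on $\mathbb{R}^p$) is applied to $\beta_S$, $\beta_S$ is viewed as the vector in $\mathbb{R}^p$ with coordinates outside $S$ set to $0$, and when a norm on $\mathbb{R}^{|S^c|}$ is applied to $\beta_{S^c}$ it is viewed as $(\beta_j)_{j\in S^c}$. Weak decomposability (Assumption II): $\Omega$ is weakly decomposable for $S$ if there is a norm $\Omega^{S^c}$ on $\mathbb{R}^{|S^c|}$ with $\Omega(\beta)\ge\Omega(\beta_S)+\Omega^{S^c}(\beta_{S^c})$ for all $\beta\in\mathbb{R}^p$; such $S$ is called allowed. Quantities: $f:=\lambda\Omega(\beta^0)/\|\epsilon\|_n$; $\lambda^0:=\Omega^*(\epsilon^TX)/(n\|\epsilon\|_n)$; $\lambda^S:=\Omega^*((\epsilon^TX)_S)/(n\|\epsilon\|_n)$; $\lambda^{S^c}:=\Omega^{S^c*}((\epsilon^TX)_{S^c})/(n\|\epsilon\|_n)$ with $\Omega^{S^c*}$ the dual of $\Omega^{S^c}$; $\lambda^m:=\max(\lambda^S,\lambda^{S^c})$. Assumption I: $P\big(Y\in\{\tilde Y:\min_{\beta:X\beta=\tilde Y}\Omega(\beta)\le\|\epsilon\|_n\}\big)=0$ and $\frac{\lambda^0}{\lambda}(1+2f)<1$.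 $\Omega$-eigenvalue: for $L>0$ and allowed $S$, $\delta_\Omega(L,S):=\min\{\|X\beta_S-X\beta_{S^c}\|_n:\ \Omega(\beta_S)=1,\ \Omega^{S^c}(\beta_{S^c})\le L\}$; $\Omega$-effective sparsity $\Gamma_\Omega^2(L,S):=1/\delta_\Omega^2(L,S)$. *)

theory Defs
  imports "HOL-Analysis.Analysis"
begin

text \<open>Vectors in R^n and R^p are rendered as real^'n, real^'p for finite index types;
  the design matrix X (n rows, p columns) is real^'p^'n.\<close>

definition nnorm :: "real^'n::finite \<Rightarrow> real" where
  "nnorm a = sqrt ((\<Sum>j\<in>UNIV. (a $ j)^2) / real CARD('n))"

definition restr :: "'p::finite set \<Rightarrow> real^'p \<Rightarrow> real^'p" where
  "restr S b = (\<chi> i. if i \<in> S then b $ i else 0)"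

definition supp :: "real^'p::finite \<Rightarrow> 'p set" where
  "supp b = {i. b $ i \<noteq> 0}"

definition coordsub :: "'p::finite set \<Rightarrow> (real^'p) set" where
  "coordsub T = {x. \<forall>i. i \<notin> T \<longrightarrow> x $ i = 0}"

definition norm_on :: "(real^'p::finite) set \<Rightarrow> (real^'p \<Rightarrow> real) \<Rightarrow> bool" where
  "norm_on V N \<longleftrightarrow>
     (\<forall>x\<in>V. 0 \<le> N x) \<and> (\<forall>x\<in>V. N x = 0 \<longrightarrow> x = 0) \<and>
     (\<forall>x\<in>V. \<forall>c. N (c *\<^sub>R x) = \<bar>c\<bar> * N x) \<and>
     (\<forall>x\<in>V. \<forall>y\<in>V. N (x + y) \<le> N x + N y)"

abbreviation is_norm :: "(real^'p::finite \<Rightarrow> real) \<Rightarrow> bool" where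
  "is_norm N \<equiv> norm_on UNIV N"

definition dual_on :: "(real^'p::finite) set \<Rightarrow> (real^'p \<Rightarrow> real) \<Rightarrow> real^'p \<Rightarrow> real" where
  "dual_on V N v = Sup {w \<bullet> v | w. w \<in> V \<and> N w \<le> 1}"

text \<open>Weak decomposability (Assumption II): OSc is a norm on R^{|S^c|}, represented as a
  norm on the coordinate subspace coordsub (-S), always applied to restr (-S) b.\<close>
definition wdec :: "(real^'p::finite \<Rightarrow> real) \<Rightarrow> 'p set \<Rightarrow> (real^'p \<Rightarrow> real) \<Rightarrow> bool" where
  "wdec Omega S OSc \<longleftrightarrow> norm_on (coordsub (- S)) OSc \<and>
     (\<forall>b. Omega b \<ge> Omega (restr S b) + OSc (restr (- S) b))"

definition allowed :: "(real^'p::finite \<Rightarrow> real) \<Rightarrow> 'p set \<Rightarrow> bool" where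
  "allowed Omega S \<longleftrightarrow> (\<exists>OSc. wdec Omega S OSc)"

definition f_q :: "real \<Rightarrow> (real^'p::finite \<Rightarrow> real) \<Rightarrow> real^'p \<Rightarrow> real^'n::finite \<Rightarrow> real" where
  "f_q lam Omega beta0 eps = lam * Omega beta0 / nnorm eps"

definition lam0 :: "real^'p::finite^'n::finite \<Rightarrow> real^'n \<Rightarrow> (real^'p \<Rightarrow> real) \<Rightarrow> real" where
  "lam0 X eps Omega = dual_on UNIV Omega (eps v* X) / (real CARD('n) * nnorm eps)"

definition lamS :: "real^'p::finite^'n::finite \<Rightarrow> real^'n \<Rightarrow> (real^'p \<Rightarrow> real) \<Rightarrow> 'p set \<Rightarrow> real" where
  "lamS X eps Omega S = dual_on UNIV Omega (restr S (eps v* X)) / (real CARD('n) * nnorm eps)"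

definition lamSc :: "real^'p::finite^'n::finite \<Rightarrow> real^'n \<Rightarrow> 'p set \<Rightarrow> (real^'p \<Rightarrow> real) \<Rightarrow> real" where
  "lamSc X eps S OSc = dual_on (coordsub (- S)) OSc (restr (- S) (eps v* X)) / (real CARD('n) * nnorm eps)"

definition lam_m :: "real^'p::finite^'n::finite \<Rightarrow> real^'n \<Rightarrow> (real^'p \<Rightarrow> real) \<Rightarrow> 'p set \<Rightarrow> (real^'p \<Rightarrow> real) \<Rightarrow> real" where
  "lam_m X eps Omega S OSc = max (lamS X eps Omega S) (lamSc X eps S OSc)"

text \<open>Omega-eigenvalue, as an extended real (min over the empty set is +infinity).\<close>
definition delta_Omega :: "real^'p::finite^'n::finite \<Rightarrow> (real^'p \<Rightarrow> real) \<Rightarrow> 'p set \<Rightarrow> (real^'p \<Rightarrow> real) \<Rightarrow> real \<Rightarrow> ereal" where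
  "delta_Omega X Omega S OSc L = Inf (ereal ` {nnorm (X *v restr S b - X *v restr (- S) b) | b.
       Omega (restr S b) = 1 \<and> OSc (restr (- S) b) \<le> L})"

text \<open>Effective sparsity Gamma^2 = 1/delta^2 in the extended reals (1/0 = infinity, 1/infinity = 0).\<close>
definition Gamma2 :: "real^'p::finite^'n::finite \<Rightarrow> (real^'p \<Rightarrow> real) \<Rightarrow> 'p set \<Rightarrow> (real^'p \<Rightarrow> real) \<Rightarrow> real \<Rightarrow> ereal" where
  "Gamma2 X Omega S OSc L = inverse (delta_Omega X Omega S OSc L * delta_Omega X Omega S OSc L)"

end

theory Submission
  imports Defs
begin

(*
  Optimality of betahat gives, in every direction b - betahat, the first-order inequality
  <resid, X(b - betahat)> <= n ||resid||_n lam (Omega b - Omega betahat), while comparing the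
  objective at betahat with its value at beta0 and using the dual norm of Omega (Assumption I)
  traps lam ||resid||_n between lam* ||eps||_n and lam~ ||eps||_n.  Weak decomposability splits
  both the penalty difference and the noise term <eps, X(betahat - b)> into an S-part and an
  S^c-part, each controlled by lam^m, and polarization turns this into a basic inequality.
  Either the S^c-part of betahat - b dominates, and the bound is immediate, or betahat - b lies
  in the cone defining the Omega-eigenvalue, and AM-GM against Gamma_Omega^2 finishes the proof.
*)

section \<open>Norms on coordinate subspaces and their duals\<close>

lemma subspace_coordsub: "subspace (coordsub T)"
  by (auto simp: subspace_def coordsub_def)

lemma coordsub_UNIV [simp]: "coordsub UNIV = UNIV"
  by (auto simp: coordsub_def)

lemma restr_in_coordsub [simp]: "restr T b \<in> coordsub T"
  by (auto simp: coordsub_def restr_def)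

context
  fixes N :: "real^'p::finite \<Rightarrow> real" and T :: "'p set"
  assumes N: "norm_on (coordsub T) N"
begin

lemma norm_on_nonneg: "x \<in> coordsub T \<Longrightarrow> 0 \<le> N x"
  using N by (simp add: norm_on_def)

lemma norm_on_eq_0: "x \<in> coordsub T \<Longrightarrow> N x = 0 \<Longrightarrow> x = 0"
  using N by (simp add: norm_on_def)

lemma norm_on_scaleR: "x \<in> coordsub T \<Longrightarrow> N (c *\<^sub>R x) = \<bar>c\<bar> * N x"
  using N by (simp add: norm_on_def)

lemma norm_on_triangle: "x \<in> coordsub T \<Longrightarrow> y \<in> coordsub T \<Longrightarrow> N (x + y) \<le> N x + N y"
  using N by (simp add: norm_on_def)

lemma norm_on_zero [simp]: "N 0 = 0"
  using norm_on_scaleR[OF subspace_0[OF subspace_coordsub], of 0] by simp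

lemma norm_on_uminus: "x \<in> coordsub T \<Longrightarrow> N (- x) = N x"
  using norm_on_scaleR[of x "-1"] by simp

lemma norm_on_triangle_diff: "x \<in> coordsub T \<Longrightarrow> y \<in> coordsub T \<Longrightarrow> N x - N y \<le> N (x - y)"
  using norm_on_triangle[of "x - y" y] subspace_diff[OF subspace_coordsub[of T]] by simp

lemma norm_on_sum_le:
  "finite I \<Longrightarrow> (\<And>i. i \<in> I \<Longrightarrow> g i \<in> coordsub T) \<Longrightarrow> N (sum g I) \<le> (\<Sum>i\<in>I. N (g i))"
proof (induction I rule: finite_induct)
  case (insert i I)
  have "N (g i + sum g I) \<le> N (g i) + N (sum g I)"
    using insert.prems by (intro norm_on_triangle subspace_sum[OF subspace_coordsub]) auto
  with insert show ?case by simp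
qed simp

lemma norm_on_le_mult_norm: "\<exists>M\<ge>0. \<forall>x\<in>coordsub T. N x \<le> M * norm x"
proof (intro exI conjI ballI)
  have axis_in: "i \<in> T \<Longrightarrow> axis i 1 \<in> coordsub T" for i
    by (auto simp: coordsub_def axis_def)
  show "0 \<le> (\<Sum>i\<in>T. N (axis i 1))"
    using axis_in by (auto intro: sum_nonneg norm_on_nonneg)
  fix x assume x: "x \<in> coordsub T"
  have "x = (\<Sum>i\<in>T. (x $ i) *\<^sub>R axis i 1)"
  proof -
    have "x = (\<Sum>i\<in>UNIV. (x $ i) *\<^sub>R axis i 1)"
      using basis_expansion[of x] by (simp add: scalar_mult_eq_scaleR)
    also have "\<dots> = (\<Sum>i\<in>T. (x $ i) *\<^sub>R axis i 1)"
      using x by (intro sum.mono_neutral_right) (auto simp: coordsub_def)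
    finally show ?thesis .
  qed
  moreover have "N (\<Sum>i\<in>T. (x $ i) *\<^sub>R axis i 1) \<le> (\<Sum>i\<in>T. N ((x $ i) *\<^sub>R axis i 1))"
    using axis_in subspace_mul[OF subspace_coordsub] by (intro norm_on_sum_le) auto
  ultimately have "N x \<le> (\<Sum>i\<in>T. N ((x $ i) *\<^sub>R axis i 1))"
    by simp
  also have "\<dots> = (\<Sum>i\<in>T. \<bar>x $ i\<bar> * N (axis i 1))"
    using axis_in by (intro sum.cong) (auto simp: norm_on_scaleR)
  also have "\<dots> \<le> (\<Sum>i\<in>T. norm x * N (axis i 1))"
    using axis_in component_le_norm_cart by (intro sum_mono mult_right_mono norm_on_nonneg) auto
  finally show "N x \<le> (\<Sum>i\<in>T. N (axis i 1)) * norm x"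
    by (simp add: sum_distrib_left mult.commute)
qed

lemma continuous_on_norm_on: "continuous_on (coordsub T) N"
proof -
  obtain M where M: "M \<ge> 0" "\<forall>x\<in>coordsub T. N x \<le> M * norm x"
    using norm_on_le_mult_norm by blast
  have "M-lipschitz_on (coordsub T) N"
  proof (rule lipschitz_onI)
    fix x y assume xy: "x \<in> coordsub T" "y \<in> coordsub T"
    have "x - y \<in> coordsub T" "y - x \<in> coordsub T"
      using xy subspace_diff[OF subspace_coordsub] by auto
    moreover have "N (y - x) = N (x - y)"
      using norm_on_uminus[of "x - y"] \<open>x - y \<in> coordsub T\<close> by simp
    ultimately have "\<bar>N x - N y\<bar> \<le> N (x - y)"
      using norm_on_triangle_diff[OF xy] norm_on_triangle_diff[of y x] xy by linarith
    also have "\<dots> \<le> M * norm (x - y)"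
      using M(2) \<open>x - y \<in> coordsub T\<close> by blast
    finally show "dist (N x) (N y) \<le> M * dist x y"
      by (simp add: dist_real_def dist_norm)
  qed (rule M(1))
  then show ?thesis by (rule lipschitz_on_continuous_on)
qed

lemma norm_on_ge_mult_norm: "\<exists>c>0. \<forall>x\<in>coordsub T. c * norm x \<le> N x"
proof (cases "sphere 0 1 \<inter> coordsub T = {}")
  case True
  have "x = 0" if x: "x \<in> coordsub T" for x
  proof (rule ccontr)
    assume "x \<noteq> 0"
    then have "(1 / norm x) *\<^sub>R x \<in> sphere 0 1 \<inter> coordsub T"
      using x subspace_mul[OF subspace_coordsub] by auto
    with True show False by blast
  qed
  then have "\<forall>x\<in>coordsub T. 1 * norm x \<le> N x"
    by fastforce
  then show ?thesis using zero_less_one by blast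
next
  case False
  have "compact (sphere 0 1 \<inter> coordsub T)"
    by (intro compact_Int_closed closed_subspace subspace_coordsub) auto
  moreover have "continuous_on (sphere 0 1 \<inter> coordsub T) N"
    by (rule continuous_on_subset[OF continuous_on_norm_on]) auto
  ultimately obtain z where z: "z \<in> sphere 0 1 \<inter> coordsub T"
      and z_min: "\<forall>y\<in>sphere 0 1 \<inter> coordsub T. N z \<le> N y"
    using continuous_attains_inf False by metis
  have "N z > 0"
    using z norm_on_nonneg norm_on_eq_0 by (force simp: less_le)
  moreover have "N z * norm x \<le> N x" if x: "x \<in> coordsub T" for x
  proof (cases "x = 0")
    case False
    then have "(1 / norm x) *\<^sub>R x \<in> sphere 0 1 \<inter> coordsub T"
      using x subspace_mul[OF subspace_coordsub] by auto
    then have "N z \<le> N ((1 / norm x) *\<^sub>R x)"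
      using z_min by blast
    then have "N z \<le> N x / norm x"
      using x by (simp add: norm_on_scaleR)
    then show ?thesis using False by (simp add: field_simps)
  qed simp
  ultimately show ?thesis by blast
qed

lemma dual_on_nonneg: "0 \<le> dual_on (coordsub T) N v"
  and inner_le_dual_on: "w \<in> coordsub T \<Longrightarrow> w \<bullet> v \<le> N w * dual_on (coordsub T) N v"
proof -
  let ?A = "{w \<bullet> v | w. w \<in> coordsub T \<and> N w \<le> 1}"
  obtain c where c: "c > 0" "\<forall>x\<in>coordsub T. c * norm x \<le> N x"
    using norm_on_ge_mult_norm by blast
  have bdd: "bdd_above ?A"
  proof (rule bdd_aboveI)
    fix y assume "y \<in> ?A"
    then obtain w where w: "y = w \<bullet> v" "w \<in> coordsub T" "N w \<le> 1" by blast
    then have "norm w \<le> 1 / c"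
      using c by (simp add: field_simps) (meson order.trans)
    then show "y \<le> 1 / c * norm v"
      using w(1) norm_cauchy_schwarz[of w v] by (meson mult_right_mono norm_ge_zero order.trans)
  qed
  have "0 \<in> ?A"
    using subspace_0[OF subspace_coordsub] by force
  then show "0 \<le> dual_on (coordsub T) N v"
    unfolding dual_on_def using bdd by (rule cSup_upper)
  assume w: "w \<in> coordsub T"
  show "w \<bullet> v \<le> N w * dual_on (coordsub T) N v"
  proof (cases "w = 0")
    case False
    then have pos: "N w > 0"
      using w norm_on_nonneg norm_on_eq_0 by (force simp: less_le)
    have "(1 / N w) *\<^sub>R w \<in> coordsub T"
      using w subspace_mul[OF subspace_coordsub] by blast
    moreover have "N ((1 / N w) *\<^sub>R w) = 1"
      using w pos by (simp add: norm_on_scaleR)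
    ultimately have "((1 / N w) *\<^sub>R w) \<bullet> v \<in> ?A" by force
    then have "((1 / N w) *\<^sub>R w) \<bullet> v \<le> dual_on (coordsub T) N v"
      unfolding dual_on_def using bdd by (rule cSup_upper)
    then show ?thesis using pos by (simp add: field_simps)
  qed simp
qed

end

lemma is_norm_nonneg: "is_norm N \<Longrightarrow> 0 \<le> N x"
  using norm_on_nonneg[of UNIV N x] by simp

lemma is_norm_zero: "is_norm N \<Longrightarrow> N 0 = 0"
  using norm_on_zero[of UNIV N] by simp

lemma is_norm_scaleR: "is_norm N \<Longrightarrow> N (c *\<^sub>R x) = \<bar>c\<bar> * N x"
  using norm_on_scaleR[of UNIV N x] by simp

lemma is_norm_triangle: "is_norm N \<Longrightarrow> N (x + y) \<le> N x + N y"
  using norm_on_triangle[of UNIV N x y] by simp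

lemma is_norm_triangle_diff: "is_norm N \<Longrightarrow> N x - N y \<le> N (x - y)"
  using norm_on_triangle_diff[of UNIV N x y] by simp

lemma is_norm_minus_commute: "is_norm N \<Longrightarrow> N (x - y) = N (y - x)"
  using norm_on_uminus[of UNIV N "x - y"] by simp

lemma is_norm_diff_le: "is_norm N \<Longrightarrow> N (x - y) \<le> N x + N y"
  using is_norm_triangle[of N x "- y"] norm_on_uminus[of UNIV N y] by simp

lemma is_norm_convex:
  "is_norm N \<Longrightarrow> 0 \<le> t \<Longrightarrow> t \<le> 1 \<Longrightarrow> N ((1 - t) *\<^sub>R x + t *\<^sub>R y) \<le> (1 - t) * N x + t * N y"
  using is_norm_triangle[of N "(1 - t) *\<^sub>R x" "t *\<^sub>R y"] by (simp add: is_norm_scaleR)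

lemma is_norm_dual_nonneg: "is_norm N \<Longrightarrow> 0 \<le> dual_on UNIV N v"
  using dual_on_nonneg[of UNIV N] by simp

lemma is_norm_inner_le_dual: "is_norm N \<Longrightarrow> w \<bullet> v \<le> N w * dual_on UNIV N v"
  using inner_le_dual_on[of UNIV N w] by simp

section \<open>The normalised norm and coordinate restrictions\<close>

lemma nnorm_eq_norm: "nnorm (a::real^'n::finite) = norm a / sqrt (real CARD('n))"
  unfolding nnorm_def norm_vec_def L2_set_def by (simp add: real_sqrt_divide)

lemma nnorm_nonneg: "0 \<le> nnorm a"
  by (simp add: nnorm_eq_norm)

lemma nnorm_pos: "a \<noteq> 0 \<Longrightarrow> 0 < nnorm a"
  by (simp add: nnorm_eq_norm)

lemma nnorm_scaleR: "nnorm (c *\<^sub>R a) = \<bar>c\<bar> * nnorm a"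
  by (simp add: nnorm_eq_norm)

lemma nnorm_power2: "nnorm (a::real^'n::finite) ^ 2 = (a \<bullet> a) / real CARD('n)"
  by (simp add: nnorm_eq_norm power_divide dot_square_norm)

lemma inner_le_card_mult_nnorm: "(a::real^'n::finite) \<bullet> b \<le> real CARD('n) * nnorm a * nnorm b"
proof -
  have "real CARD('n) * nnorm a * nnorm b = norm a * norm b"
    by (simp add: nnorm_eq_norm field_simps)
  then show ?thesis using norm_cauchy_schwarz[of a b] by simp
qed

lemma nnorm_diff_power2:
  "nnorm ((u::real^'n::finite) - w) ^ 2 = nnorm u ^ 2 + nnorm w ^ 2 - 2 * (u \<bullet> w / real CARD('n))"
proof -
  have "0 < real CARD('n)" by simp
  then show ?thesis
    by (simp add: nnorm_power2 inner_diff_left inner_diff_right inner_commute field_simps)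
qed

lemma restr_add_restr_compl: "restr S x + restr (- S) x = x"
  by (auto simp: restr_def vec_eq_iff)

lemma restr_diff: "restr S (x - y) = restr S x - restr S y"
  by (auto simp: restr_def vec_eq_iff)

lemma restr_scaleR: "restr S (c *\<^sub>R x) = c *\<^sub>R restr S x"
  by (auto simp: restr_def vec_eq_iff)

lemma coordsub_iff_supp: "x \<in> coordsub T \<longleftrightarrow> supp x \<subseteq> T"
  by (auto simp: coordsub_def supp_def)

lemma restr_coordsub_self: "x \<in> coordsub T \<Longrightarrow> restr T x = x"
  by (auto simp: restr_def vec_eq_iff coordsub_def)

lemma restr_coordsub_disjoint: "x \<in> coordsub T \<Longrightarrow> S \<inter> T = {} \<Longrightarrow> restr S x = 0"
  by (auto simp: restr_def vec_eq_iff coordsub_def)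

lemma inner_restr: "restr S u \<bullet> v = restr S u \<bullet> restr S v"
  unfolding inner_vec_def restr_def by (intro sum.cong) auto

section \<open>Weak decomposability and the Omega-eigenvalue\<close>

lemma wdec_norm_on: "wdec Omega S OSc \<Longrightarrow> norm_on (coordsub (- S)) OSc"
  by (simp add: wdec_def)

lemma wdec_ge: "wdec Omega S OSc \<Longrightarrow> Omega (restr S b) + OSc (restr (- S) b) \<le> Omega b"
  by (simp add: wdec_def)

lemma dual_on_le_max_of_wdec:
  assumes Om: "is_norm Omega" and wd: "wdec Omega S OSc"
  shows "dual_on UNIV Omega x
    \<le> max (dual_on UNIV Omega (restr S x)) (dual_on (coordsub (- S)) OSc (restr (- S) x))"
proof -
  define d where "d = max (dual_on UNIV Omega (restr S x)) (dual_on (coordsub (- S)) OSc (restr (- S) x))"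
  have OSc: "norm_on (coordsub (- S)) OSc" using wd by (rule wdec_norm_on)
  have d0: "0 \<le> d"
    unfolding d_def using is_norm_dual_nonneg[OF Om] by (simp add: le_max_iff_disj)
  have "w \<bullet> x \<le> d" if "Omega w \<le> 1" for w
  proof -
    have "w \<bullet> x = restr S w \<bullet> x + restr (- S) w \<bullet> x"
      using restr_add_restr_compl[of S w] by (metis inner_add_left)
    also have "\<dots> = restr S w \<bullet> restr S x + restr (- S) w \<bullet> restr (- S) x"
      using inner_restr[of S w x] inner_restr[of "- S" w x] by simp
    also have "\<dots> \<le> Omega (restr S w) * d + OSc (restr (- S) w) * d"
    proof (rule add_mono)
      have "restr S w \<bullet> restr S x \<le> Omega (restr S w) * dual_on UNIV Omega (restr S x)"
        by (rule is_norm_inner_le_dual[OF Om])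
      also have "\<dots> \<le> Omega (restr S w) * d"
        unfolding d_def by (intro mult_left_mono is_norm_nonneg[OF Om]) simp
      finally show "restr S w \<bullet> restr S x \<le> Omega (restr S w) * d" .
      have "restr (- S) w \<bullet> restr (- S) x
          \<le> OSc (restr (- S) w) * dual_on (coordsub (- S)) OSc (restr (- S) x)"
        by (rule inner_le_dual_on[OF OSc restr_in_coordsub])
      also have "\<dots> \<le> OSc (restr (- S) w) * d"
        unfolding d_def by (intro mult_left_mono norm_on_nonneg[OF OSc restr_in_coordsub]) simp
      finally show "restr (- S) w \<bullet> restr (- S) x \<le> OSc (restr (- S) w) * d" .
    qed
    also have "\<dots> \<le> Omega w * d"
      using mult_right_mono[OF wdec_ge[OF wd, of w] d0] by (simp add: distrib_right)
    also have "\<dots> \<le> d"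
      using that d0 by (intro mult_left_le_one_le is_norm_nonneg[OF Om])
    finally show ?thesis .
  qed
  moreover have "0 \<bullet> x \<in> {w \<bullet> x | w. w \<in> UNIV \<and> Omega w \<le> 1}"
    using is_norm_zero[OF Om] by (intro CollectI exI[of _ 0]) simp
  ultimately have "Sup {w \<bullet> x | w. w \<in> UNIV \<and> Omega w \<le> 1} \<le> d"
    by (intro cSup_least) auto
  then show ?thesis
    by (simp add: d_def dual_on_def[of UNIV Omega x])
qed

lemma lam0_le_lam_m:
  fixes X :: "real^'p::finite^'n::finite"
  assumes "is_norm Omega" "wdec Omega S OSc"
  shows "lam0 X eps Omega \<le> lam_m X eps Omega S OSc"
proof -
  define c where "c = real CARD('n) * nnorm eps"
  have "0 \<le> c"
    by (simp add: c_def nnorm_nonneg)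
  then have "dual_on UNIV Omega (eps v* X) / c
      \<le> max (dual_on UNIV Omega (restr S (eps v* X))) (dual_on (coordsub (- S)) OSc (restr (- S) (eps v* X))) / c"
    using dual_on_le_max_of_wdec[OF assms] by (rule divide_right_mono[rotated])
  also have "\<dots> = lam_m X eps Omega S OSc"
    unfolding lam_m_def lamS_def lamSc_def c_def[symmetric] using \<open>0 \<le> c\<close> by (simp add: max_divide_distrib_right)
  finally show ?thesis
    unfolding lam0_def c_def .
qed

lemma lam0_nonneg: "is_norm Omega \<Longrightarrow> 0 \<le> lam0 X eps Omega"
  unfolding lam0_def by (intro divide_nonneg_nonneg is_norm_dual_nonneg) (simp_all add: nnorm_nonneg)

lemma inner_noise_le_lam0:
  fixes X :: "real^'p::finite^'n::finite"
  assumes Om: "is_norm Omega" and eps: "eps \<noteq> 0"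
  shows "eps \<bullet> (X *v v) \<le> real CARD('n) * nnorm eps * lam0 X eps Omega * Omega v"
proof -
  have "dual_on UNIV Omega (eps v* X) = real CARD('n) * nnorm eps * lam0 X eps Omega"
    using nnorm_pos[OF eps] by (simp add: lam0_def)
  then show ?thesis
    using is_norm_inner_le_dual[OF Om, of v "eps v* X"]
    by (simp add: dot_lmul_matrix[symmetric] inner_commute mult.commute)
qed

lemma lam_m_nonneg: "is_norm Omega \<Longrightarrow> 0 \<le> lam_m X eps Omega S OSc"
  unfolding lam_m_def lamS_def
  by (intro max.coboundedI1 divide_nonneg_nonneg is_norm_dual_nonneg) (simp_all add: nnorm_nonneg)

lemma inner_noise_le_lam_m:
  fixes X :: "real^'p::finite^'n::finite"
  assumes Om: "is_norm Omega" and wd: "wdec Omega S OSc" and eps: "eps \<noteq> 0"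
  shows "eps \<bullet> (X *v v)
    \<le> real CARD('n) * nnorm eps * lam_m X eps Omega S OSc * (Omega (restr S v) + OSc (restr (- S) v))"
proof -
  define \<xi> where "\<xi> = eps v* X"
  define c where "c = real CARD('n) * nnorm eps"
  define lm where "lm = lam_m X eps Omega S OSc"
  have c: "0 < c" using nnorm_pos[OF eps] by (simp add: c_def)
  have OSc: "norm_on (coordsub (- S)) OSc" using wd by (rule wdec_norm_on)
  have "dual_on UNIV Omega (restr S \<xi>) = lamS X eps Omega S * c"
    and "dual_on (coordsub (- S)) OSc (restr (- S) \<xi>) = lamSc X eps S OSc * c"
    using c unfolding lamS_def lamSc_def \<xi>_def c_def[symmetric] by simp_all
  then have dS: "dual_on UNIV Omega (restr S \<xi>) \<le> lm * c"
    and dSc: "dual_on (coordsub (- S)) OSc (restr (- S) \<xi>) \<le> lm * c"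
    using c by (simp_all add: lm_def lam_m_def)
  have "eps \<bullet> (X *v v) = restr S v \<bullet> restr S \<xi> + restr (- S) v \<bullet> restr (- S) \<xi>"
    unfolding \<xi>_def dot_lmul_matrix[symmetric]
    by (metis inner_add_right inner_commute inner_restr restr_add_restr_compl)
  also have "\<dots> \<le> Omega (restr S v) * (lm * c) + OSc (restr (- S) v) * (lm * c)"
    using is_norm_inner_le_dual[OF Om, of "restr S v" "restr S \<xi>"]
      inner_le_dual_on[OF OSc restr_in_coordsub, of v "restr (- S) \<xi>"]
      mult_left_mono[OF dS is_norm_nonneg[OF Om, of "restr S v"]]
      mult_left_mono[OF dSc norm_on_nonneg[OF OSc restr_in_coordsub[of "- S" v]]]
    by linarith
  finally show ?thesis
    by (simp add: c_def lm_def algebra_simps)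
qed

lemma wdec_norm_diff_le:
  assumes Om: "is_norm Omega" and wd: "wdec Omega S OSc"
  shows "Omega b - Omega \<beta> \<le> Omega (restr S \<beta> - b) - OSc (restr (- S) \<beta>)"
  using wdec_ge[OF wd, of \<beta>] is_norm_triangle_diff[OF Om, of b "restr S \<beta>"]
    is_norm_minus_commute[OF Om, of b "restr S \<beta>"] by linarith

lemma delta_Omega_nonneg: "0 \<le> delta_Omega X Omega S OSc L"
  unfolding delta_Omega_def by (intro Inf_greatest) (auto simp: nnorm_nonneg)

lemma Gamma2_nonneg: "0 \<le> Gamma2 X Omega S OSc L"
  unfolding Gamma2_def by (intro inverse_ereal_ge0I ereal_0_le_mult delta_Omega_nonneg)

text \<open>Here z and z' play the roles of \<beta>_S and -\<beta>_{S^c} in the definition of delta_Omega.\<close>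
lemma delta_Omega_le:
  assumes Om: "is_norm Omega" and OSc: "norm_on (coordsub (- S)) OSc"
    and z: "z \<in> coordsub S" and z': "z' \<in> coordsub (- S)"
    and pos: "0 < Omega z" and cone: "OSc z' \<le> L * Omega z"
  shows "delta_Omega X Omega S OSc L \<le> ereal (nnorm (X *v (z + z')) / Omega z)"
proof -
  define c where "c = 1 / Omega z"
  have c: "0 < c" using pos by (simp add: c_def)
  define v where "v = c *\<^sub>R z - c *\<^sub>R z'"
  have vS: "restr S v = c *\<^sub>R z" and vSc: "restr (- S) v = - (c *\<^sub>R z')"
    using z z' by (auto simp: v_def restr_diff restr_scaleR restr_coordsub_self restr_coordsub_disjoint)
  have "Omega (restr S v) = 1"
    using pos by (simp add: vS is_norm_scaleR[OF Om] c_def)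
  moreover have "OSc (restr (- S) v) \<le> L"
  proof -
    have "c *\<^sub>R z' \<in> coordsub (- S)"
      using z' subspace_mul[OF subspace_coordsub] by blast
    then have "OSc (restr (- S) v) = c * OSc z'"
      using c by (simp add: vSc norm_on_uminus[OF OSc] norm_on_scaleR[OF OSc z'])
    also have "\<dots> \<le> L"
      using cone pos by (simp add: c_def field_simps)
    finally show ?thesis .
  qed
  moreover have "nnorm (X *v restr S v - X *v restr (- S) v) = nnorm (X *v (z + z')) / Omega z"
  proof -
    have "restr S v - restr (- S) v = c *\<^sub>R (z + z')"
      by (simp add: vS vSc scaleR_right_distrib)
    then have "X *v restr S v - X *v restr (- S) v = c *\<^sub>R (X *v (z + z'))"
      by (metis matrix_vector_mult_diff_distrib matrix_vector_mult_scaleR)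
    then show ?thesis
      using c by (simp add: nnorm_scaleR c_def)
  qed
  ultimately show ?thesis
    unfolding delta_Omega_def by (intro Inf_lower) force
qed

lemma delta_Omega_le_diff:
  assumes Om: "is_norm Omega" and wd: "wdec Omega S OSc" and b: "supp b \<subseteq> S"
    and pos: "0 < Omega (restr S \<beta> - b)"
    and cone: "OSc (restr (- S) \<beta>) \<le> L * Omega (restr S \<beta> - b)"
  shows "delta_Omega X Omega S OSc L \<le> ereal (nnorm (X *v (\<beta> - b)) / Omega (restr S \<beta> - b))"
proof -
  have z: "restr S \<beta> - b \<in> coordsub S"
    using b by (intro subspace_diff[OF subspace_coordsub] restr_in_coordsub) (simp add: coordsub_iff_supp)
  have sum: "(restr S \<beta> - b) + restr (- S) \<beta> = \<beta> - b"
    using restr_add_restr_compl[of S \<beta>] by (simp add: algebra_simps)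
  from delta_Omega_le[OF Om wdec_norm_on[OF wd] z restr_in_coordsub pos cone, of X]
  show ?thesis by (simp only: sum)
qed

text \<open>A one-sided directional derivative bound for the Euclidean norm: the derivative of
  t \<mapsto> norm (R - t v) at 0 is -(R \<bullet> v) / norm R.\<close>
lemma inner_le_of_norm_directional_bound:
  fixes R v :: "'a::real_inner"
  assumes dir: "\<And>t. 0 < t \<Longrightarrow> t \<le> 1 \<Longrightarrow> norm R - t * E \<le> norm (R - t *\<^sub>R v)"
  shows "R \<bullet> v \<le> norm R * E"
proof (cases "R = 0")
  case False
  define t0 where "t0 = min 1 (norm R / (\<bar>E\<bar> + 1))"
  have t0: "0 < t0" using False by (simp add: t0_def)
  have small: "R \<bullet> v \<le> norm R * E + t * (v \<bullet> v)" if t: "0 < t" "t \<le> t0" for t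
  proof -
    have "t * (\<bar>E\<bar> + 1) \<le> norm R"
      using t by (simp add: t0_def le_divide_eq)
    then have "0 \<le> norm R - t * E"
      using t by (smt (verit, best) abs_ge_self mult_left_mono)
    then have "(norm R - t * E)\<^sup>2 \<le> (norm (R - t *\<^sub>R v))\<^sup>2"
      using dir t by (intro power_mono) (auto simp: t0_def)
    also have "\<dots> = (norm R)\<^sup>2 - 2 * t * (R \<bullet> v) + t\<^sup>2 * (v \<bullet> v)"
      unfolding power2_norm_eq_inner
      by (simp add: inner_diff_left inner_diff_right inner_commute algebra_simps power2_eq_square)
    finally have "2 * t * (R \<bullet> v) \<le> 2 * t * (norm R * E) + t * (t * (v \<bullet> v)) - (t * E)\<^sup>2"
      by (simp add: power2_eq_square algebra_simps)
    then have "2 * t * (R \<bullet> v) \<le> 2 * t * (norm R * E) + t * (t * (v \<bullet> v))"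
      using zero_le_power2[of "t * E"] by linarith
    moreover have "t * (t * (v \<bullet> v)) \<le> 2 * t * (t * (v \<bullet> v))"
      using t by (simp add: mult_nonneg_nonneg)
    ultimately have "2 * t * (R \<bullet> v) \<le> 2 * t * (norm R * E + t * (v \<bullet> v))"
      by (simp add: algebra_simps)
    then show ?thesis using t by (simp add: mult_le_cancel_left_pos)
  qed
  show ?thesis
  proof (rule field_le_epsilon)
    fix e :: real assume e: "0 < e"
    define t where "t = min t0 (e / (v \<bullet> v + 1))"
    have vv: "0 < v \<bullet> v + 1" by (simp add: add_nonneg_pos)
    have "0 < t" "t \<le> t0" using t0 e vv by (auto simp: t_def)
    moreover have "t * (v \<bullet> v) \<le> e"
    proof -
      have "t \<le> e / (v \<bullet> v + 1)" by (simp add: t_def)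
      then have "t * (v \<bullet> v + 1) \<le> e" using vv by (simp add: pos_le_divide_eq)
      moreover have "t * (v \<bullet> v) \<le> t * (v \<bullet> v + 1)" using \<open>0 < t\<close> by simp
      ultimately show ?thesis by linarith
    qed
    ultimately show "R \<bullet> v \<le> norm R * E + e" using small by force
  qed
qed simp

lemma inner_le_of_nnorm_directional_bound:
  fixes R v :: "real^'n::finite"
  assumes dir: "\<And>t. 0 < t \<Longrightarrow> t \<le> 1 \<Longrightarrow> nnorm R - t * D \<le> nnorm (R - t *\<^sub>R v)"
  shows "R \<bullet> v \<le> real CARD('n) * nnorm R * D"
proof -
  define s where "s = sqrt (real CARD('n))"
  have s: "0 < s" and card: "real CARD('n) = s * s" by (simp_all add: s_def)
  have sn: "s * nnorm x = norm x" for x :: "real^'n"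
    using s by (simp add: nnorm_eq_norm s_def[symmetric])
  have "R \<bullet> v \<le> norm R * (s * D)"
  proof (rule inner_le_of_norm_directional_bound)
    fix t :: real assume "0 < t" "t \<le> 1"
    then have "nnorm R - t * D \<le> nnorm (R - t *\<^sub>R v)" by (rule dir)
    then have "s * (nnorm R - t * D) \<le> s * nnorm (R - t *\<^sub>R v)"
      using s by (intro mult_left_mono) simp_all
    moreover have "s * (nnorm R - t * D) = norm R - t * (s * D)"
      using sn[of R] by (simp add: right_diff_distrib mult.left_commute)
    ultimately show "norm R - t * (s * D) \<le> norm (R - t *\<^sub>R v)"
      using sn[of "R - t *\<^sub>R v"] by linarith
  qed
  also have "\<dots> = real CARD('n) * nnorm R * D"
    using sn[of R] by (simp add: card mult.assoc mult.left_commute)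
  finally show ?thesis .
qed

lemma two_mul_le_power2_add:
  fixes x A s d :: real
  assumes d: "0 < d" and A: "0 < A" and dA: "d * A \<le> s"
  shows "2 * x * A \<le> s\<^sup>2 + (x / d)\<^sup>2"
proof -
  have s: "0 < s" using d A dA by (smt (verit) mult_pos_pos)
  have "0 \<le> (x * A / s - s)\<^sup>2" by simp
  then have "2 * x * A \<le> s\<^sup>2 + (\<bar>x\<bar> * (A / s))\<^sup>2"
    using s by (simp add: power2_eq_square algebra_simps)
  also have "(\<bar>x\<bar> * (A / s))\<^sup>2 \<le> (\<bar>x\<bar> * (1 / d))\<^sup>2"
  proof -
    have "A / s \<le> 1 / d" using d s dA by (simp add: field_simps)
    then show ?thesis using A s by (intro power_mono mult_left_mono) simp_all
  qed
  finally show ?thesis by (simp add: power_mult_distrib power_divide)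
qed

lemma ereal_two_mul_sub_le_inverse_square:
  fixes x A s :: real and d :: ereal
  assumes A: "0 < A" and d: "0 \<le> d" "d \<le> ereal (s / A)"
  shows "ereal (2 * x * A - s\<^sup>2) \<le> ereal (x\<^sup>2) * inverse (d * d)"
proof (cases "d = 0")
  case True
  then show ?thesis by (cases "x = 0") simp_all
next
  case False
  with d obtain d' where d': "d = ereal d'" "0 < d'" "d' \<le> s / A"
    by (cases d) auto
  have "2 * x * A \<le> s\<^sup>2 + (x / d')\<^sup>2"
    using d' A by (intro two_mul_le_power2_add) (simp_all add: field_simps)
  moreover have "inverse (d * d) = ereal (1 / (d' * d'))"
    using d' by (simp add: field_simps)
  ultimately show ?thesis
    by (simp add: power_divide power2_eq_square)
qed

text \<open>Either the S^c-part of the error dominates and the bound is trivial, or the error lies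
  in the cone defining the Omega-eigenvalue d and AM-GM applies.\<close>
lemma oracle_bound_of_basic_inequality:
  fixes P Q s A B e c1 c2 delta :: real and d :: ereal
  assumes e: "0 \<le> e" and c2: "0 < c2"
    and delta: "0 \<le> delta" "delta < 1" and A: "0 \<le> A" and B: "0 \<le> B"
    and basic: "P + s\<^sup>2 + 2 * e * c2 * B \<le> Q + 2 * e * c1 * A"
    and d: "0 \<le> d"
    and cone: "0 < A \<Longrightarrow> B \<le> c1 / c2 * ((1 + delta) / (1 - delta)) * A \<Longrightarrow> d \<le> ereal (s / A)"
  shows "ereal (P + 2 * delta * e * (c1 * A + c2 * B))
    \<le> ereal Q + ereal (e\<^sup>2 * ((1 + delta) * c1)\<^sup>2) * inverse (d * d)"
proof -
  define x where "x = e * (1 + delta) * c1"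
  have C: "e\<^sup>2 * ((1 + delta) * c1)\<^sup>2 = x\<^sup>2"
    by (simp add: x_def power_mult_distrib)
  have slack: "0 \<le> (1 - delta) * c2 * B"
    using delta c2 B by simp
  have base: "P + 2 * delta * e * (c1 * A + c2 * B) + 2 * e * ((1 - delta) * c2 * B)
      \<le> Q + (2 * x * A - s\<^sup>2)"
    using basic by (simp add: x_def algebra_simps)
  show ?thesis
    unfolding C
  proof (cases "(1 + delta) * c1 * A \<le> (1 - delta) * c2 * B")
    case True
    have "2 * x * A = 2 * e * ((1 + delta) * c1 * A)"
      by (simp add: x_def algebra_simps)
    also have "\<dots> \<le> 2 * e * ((1 - delta) * c2 * B)"
      using True e by (intro mult_left_mono) simp_all
    finally have "P + 2 * delta * e * (c1 * A + c2 * B) \<le> Q"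
      using base zero_le_power2[of s] by linarith
    moreover have "0 \<le> ereal (x\<^sup>2) * inverse (d * d)"
      using d by (intro ereal_0_le_mult inverse_ereal_ge0I) simp_all
    ultimately show "ereal (P + 2 * delta * e * (c1 * A + c2 * B)) \<le> ereal Q + ereal (x\<^sup>2) * inverse (d * d)"
      by (metis add_increasing2 ereal_less_eq(3))
  next
    case False
    have A_pos: "0 < A"
      using False slack A by (cases "A = 0") simp_all
    have "B \<le> c1 / c2 * ((1 + delta) / (1 - delta)) * A"
      using False c2 delta by (simp add: field_simps)
    then have "d \<le> ereal (s / A)" using cone A_pos by blast
    have "0 \<le> 2 * e * ((1 - delta) * c2 * B)"
      using e slack by simp
    then have "P + 2 * delta * e * (c1 * A + c2 * B) \<le> Q + (2 * x * A - s\<^sup>2)"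
      using base by linarith
    then have "ereal (P + 2 * delta * e * (c1 * A + c2 * B)) \<le> ereal Q + ereal (2 * x * A - s\<^sup>2)"
      by simp
    also have "\<dots> \<le> ereal Q + ereal (x\<^sup>2) * inverse (d * d)"
      by (intro add_left_mono ereal_two_mul_sub_le_inverse_square[OF A_pos d \<open>d \<le> ereal (s / A)\<close>])
    finally show "ereal (P + 2 * delta * e * (c1 * A + c2 * B)) \<le> ereal Q + ereal (x\<^sup>2) * inverse (d * d)" .
  qed
qed

lemma ereal_le_divide_of_add_le:
  fixes P R T Q C c :: real and G :: ereal
  assumes H: "ereal (P + R) \<le> ereal Q + ereal C * G" and R: "c * T \<le> R"
    and P: "0 \<le> P" and c: "0 < c" and C: "0 < C" and G: "0 \<le> G"
  shows "ereal T \<le> ereal (Q / c) + ereal (C / c) * G"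
proof (cases G)
  case (real g)
  then have "T * c \<le> Q + C * g" using H R P by (simp add: mult.commute)
  then have "T \<le> (Q + C * g) / c" using c by (simp add: pos_le_divide_eq)
  then show ?thesis using real by (simp add: add_divide_distrib)
qed (use C c G in simp_all)

section \<open>The square-root Lasso\<close>

locale sqrt_lasso =
  fixes X :: "real^'p::finite^'n::finite" and beta0 betahat :: "real^'p"
    and eps Y :: "real^'n" and Omega :: "real^'p \<Rightarrow> real" and lam :: real
  assumes model: "Y = X *v beta0 + eps"
    and eps_nz: "eps \<noteq> 0"
    and Omega_norm: "is_norm Omega"
    and lam_pos: "lam > 0"
    and betahat_min: "\<forall>b. nnorm (Y - X *v betahat) + lam * Omega betahat
                          \<le> nnorm (Y - X *v b) + lam * Omega b"
    and lam0_small: "lam0 X eps Omega / lam * (1 + 2 * f_q lam Omega beta0 eps) < 1"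
begin

abbreviation f :: real where "f \<equiv> f_q lam Omega beta0 eps"

abbreviation lam_star :: real
  where "lam_star \<equiv> lam * (1 - lam0 X eps Omega / lam * (1 + 2 * f)) / (f + 2)"

abbreviation lam_tilde :: real where "lam_tilde \<equiv> lam * (1 + f)"

abbreviation resid :: "real^'n" where "resid \<equiv> Y - X *v betahat"

lemma eps_nnorm_pos: "0 < nnorm eps"
  using nnorm_pos[OF eps_nz] .

lemma f_nonneg: "0 \<le> f"
  unfolding f_q_def using lam_pos
  by (intro divide_nonneg_nonneg mult_nonneg_nonneg) (simp_all add: is_norm_nonneg[OF Omega_norm] nnorm_nonneg)

lemma lam_Omega_beta0: "lam * Omega beta0 = f * nnorm eps"
  using eps_nnorm_pos by (simp add: f_q_def)

lemma lam_star_numerator_pos: "0 < lam - lam0 X eps Omega * (1 + 2 * f)"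
  using lam0_small lam_pos by (simp add: field_simps)

lemma lam_star_eq: "lam_star = (lam - lam0 X eps Omega * (1 + 2 * f)) / (f + 2)"
  using lam_pos by (simp add: right_diff_distrib)

lemma lam_star_le_numerator: "lam_star \<le> lam - lam0 X eps Omega * (1 + 2 * f)"
  unfolding lam_star_eq using lam_star_numerator_pos f_nonneg by (simp add: divide_le_eq)

lemma lam_star_le_lam_tilde: "lam_star \<le> lam_tilde"
proof -
  have "0 \<le> lam0 X eps Omega * (1 + 2 * f)"
    using lam0_nonneg[OF Omega_norm, of X eps] f_nonneg by simp
  moreover have "lam \<le> lam_tilde"
    using lam_pos f_nonneg by simp
  ultimately show ?thesis
    using lam_star_le_numerator by linarith
qed

lemma lam_m_less_lam_star:
  assumes wd: "wdec Omega S OSc" and small: "3 * (1 + f) * lam_m X eps Omega S OSc < lam"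
  shows "lam_m X eps Omega S OSc < lam_star"
proof -
  define lm where "lm = lam_m X eps Omega S OSc"
  have "lam0 X eps Omega * (1 + 2 * f) \<le> lm * (1 + 2 * f)"
    using lam0_le_lam_m[OF Omega_norm wd] f_nonneg by (simp add: lm_def mult_right_mono)
  then have "(f + 2) * lm < lam - lam0 X eps Omega * (1 + 2 * f)"
    using small by (simp add: lm_def algebra_simps)
  then show ?thesis
    unfolding lam_star_eq lm_def[symmetric] using f_nonneg by (simp add: less_divide_eq mult.commute)
qed

lemma objective_le_at_beta0: "nnorm resid + lam * Omega betahat \<le> nnorm eps * (1 + f)"
  using betahat_min[rule_format, of beta0] lam_Omega_beta0 by (simp add: model algebra_simps)

lemma resid_upper: "lam * nnorm resid \<le> nnorm eps * lam_tilde"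
proof -
  have "0 \<le> lam * Omega betahat"
    using lam_pos is_norm_nonneg[OF Omega_norm] by simp
  then have "nnorm resid \<le> nnorm eps * (1 + f)"
    using objective_le_at_beta0 by linarith
  then show ?thesis
    using lam_pos by (simp add: mult_left_mono mult.left_commute)
qed

lemma nnorm_eps_le_resid:
  "nnorm eps \<le> nnorm resid + lam0 X eps Omega * (Omega betahat + Omega beta0)"
proof -
  define n where "n = real CARD('n)"
  define e where "e = nnorm eps"
  define l0 where "l0 = lam0 X eps Omega"
  have ne: "0 < n * e" using eps_nnorm_pos by (simp add: n_def e_def)
  have "n * e * e = eps \<bullet> eps"
    using nnorm_power2[of eps] by (simp add: n_def e_def power2_eq_square field_simps)
  also have "\<dots> = eps \<bullet> (resid + X *v (betahat - beta0))"
    by (simp add: model algebra_simps)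
  also have "\<dots> = eps \<bullet> resid + eps \<bullet> (X *v (betahat - beta0))"
    by (rule inner_add_right)
  also have "\<dots> \<le> n * e * nnorm resid + n * e * l0 * Omega (betahat - beta0)"
    using inner_le_card_mult_nnorm[of eps resid] inner_noise_le_lam0[OF Omega_norm eps_nz]
    by (intro add_mono) (simp_all add: n_def e_def l0_def)
  also have "\<dots> \<le> n * e * nnorm resid + n * e * l0 * (Omega betahat + Omega beta0)"
    using ne lam0_nonneg[OF Omega_norm, of X eps] is_norm_diff_le[OF Omega_norm]
    by (intro add_left_mono mult_left_mono) (simp_all add: l0_def)
  finally have "n * e * e \<le> n * e * (nnorm resid + l0 * (Omega betahat + Omega beta0))"
    by (simp add: algebra_simps)
  then show ?thesis
    using mult_le_cancel_left_pos[OF ne] by (simp add: e_def l0_def)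
qed

lemma resid_lower: "nnorm eps * lam_star \<le> lam * nnorm resid"
proof -
  define e where "e = nnorm eps"
  define l0 where "l0 = lam0 X eps Omega"
  have "lam * e \<le> lam * nnorm resid + l0 * (lam * Omega betahat + lam * Omega beta0)"
    using mult_left_mono[OF nnorm_eps_le_resid, of lam] lam_pos
    by (simp add: e_def l0_def algebra_simps)
  moreover have "l0 * (lam * Omega betahat + lam * Omega beta0) \<le> l0 * (e * (1 + 2 * f))"
    using objective_le_at_beta0 lam_Omega_beta0 nnorm_nonneg[of resid] lam0_nonneg[OF Omega_norm]
    by (intro mult_left_mono) (simp_all add: e_def l0_def algebra_simps)
  ultimately have "e * (lam - l0 * (1 + 2 * f)) \<le> lam * nnorm resid"
    by (simp add: algebra_simps)
  moreover have "e * lam_star \<le> e * (lam - l0 * (1 + 2 * f))"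
    unfolding e_def l0_def using eps_nnorm_pos by (intro mult_left_mono lam_star_le_numerator) simp
  ultimately show ?thesis by (simp add: e_def)
qed

lemma first_order_condition:
  "resid \<bullet> (X *v (b - betahat)) \<le> real CARD('n) * nnorm resid * (lam * (Omega b - Omega betahat))"
proof (rule inner_le_of_nnorm_directional_bound)
  fix t :: real assume t: "0 < t" "t \<le> 1"
  have "nnorm resid + lam * Omega betahat
      \<le> nnorm (Y - X *v ((1 - t) *\<^sub>R betahat + t *\<^sub>R b)) + lam * Omega ((1 - t) *\<^sub>R betahat + t *\<^sub>R b)"
    using betahat_min by blast
  also have "Y - X *v ((1 - t) *\<^sub>R betahat + t *\<^sub>R b) = resid - t *\<^sub>R (X *v (b - betahat))"
    by (simp add: algebra_simps matrix_vector_right_distrib)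
  also have "lam * Omega ((1 - t) *\<^sub>R betahat + t *\<^sub>R b) \<le> lam * ((1 - t) * Omega betahat + t * Omega b)"
    using is_norm_convex[OF Omega_norm] t lam_pos by (simp add: mult_left_mono)
  finally show "nnorm resid - t * (lam * (Omega b - Omega betahat)) \<le> nnorm (resid - t *\<^sub>R (X *v (b - betahat)))"
    by (simp add: algebra_simps)
qed

lemma signal_inner_le:
  assumes wd: "wdec Omega S OSc"
  shows "(X *v (betahat - beta0)) \<bullet> (X *v (betahat - b)) - eps \<bullet> (X *v (betahat - b))
    \<le> real CARD('n) * (nnorm eps * lam_tilde * Omega (restr S betahat - b)
                        - nnorm eps * lam_star * OSc (restr (- S) betahat))"
proof -
  define n where "n = real CARD('n)"
  define e where "e = nnorm eps"
  define r where "r = nnorm resid"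
  define A where "A = Omega (restr S betahat - b)"
  define B where "B = OSc (restr (- S) betahat)"
  have n: "0 < n" by (simp add: n_def)
  have A: "0 \<le> A" using is_norm_nonneg[OF Omega_norm] by (simp add: A_def)
  have B: "0 \<le> B" using norm_on_nonneg[OF wdec_norm_on[OF wd] restr_in_coordsub] by (simp add: B_def)
  have "(X *v (betahat - beta0)) \<bullet> (X *v (betahat - b)) - eps \<bullet> (X *v (betahat - b))
      = resid \<bullet> (X *v (b - betahat))"
  proof -
    have "resid = eps - X *v (betahat - beta0)" and "X *v (b - betahat) = - (X *v (betahat - b))"
      by (simp_all add: model algebra_simps)
    then show ?thesis by (simp add: inner_diff_left)
  qed
  also have "\<dots> \<le> n * r * (lam * (Omega b - Omega betahat))"
    unfolding n_def r_def by (rule first_order_condition)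
  also have "\<dots> \<le> n * ((r * lam) * A - (r * lam) * B)"
  proof -
    have "Omega b - Omega betahat \<le> A - B"
      unfolding A_def B_def by (rule wdec_norm_diff_le[OF Omega_norm wd])
    then have "n * r * (lam * (Omega b - Omega betahat)) \<le> n * r * (lam * (A - B))"
      using n lam_pos nnorm_nonneg[of resid] by (intro mult_left_mono) (simp_all add: r_def)
    then show ?thesis by (simp add: algebra_simps)
  qed
  also have "\<dots> \<le> n * (e * lam_tilde * A - e * lam_star * B)"
  proof -
    have "(r * lam) * A \<le> (e * lam_tilde) * A"
      using resid_upper A by (intro mult_right_mono) (simp_all add: r_def e_def mult.commute)
    moreover have "(e * lam_star) * B \<le> (r * lam) * B"
      using resid_lower B by (intro mult_right_mono) (simp_all add: r_def e_def mult.commute)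
    ultimately show ?thesis
      using n by (intro mult_left_mono) simp_all
  qed
  finally show ?thesis
    unfolding n_def e_def A_def B_def .
qed

lemma basic_inequality:
  assumes wd: "wdec Omega S OSc" and sb: "supp b \<subseteq> S"
  shows "nnorm (X *v (betahat - beta0))^2 + nnorm (X *v (betahat - b))^2
           + 2 * nnorm eps * (lam_star - lam_m X eps Omega S OSc) * OSc (restr (- S) betahat)
         \<le> nnorm (X *v (b - beta0))^2
           + 2 * nnorm eps * (lam_tilde + lam_m X eps Omega S OSc) * Omega (restr S betahat - b)"
proof -
  define n where "n = real CARD('n)"
  define e where "e = nnorm eps"
  define lm where "lm = lam_m X eps Omega S OSc"
  define A where "A = Omega (restr S betahat - b)"
  define B where "B = OSc (restr (- S) betahat)"
  define u where "u = X *v (betahat - beta0)"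
  define w where "w = X *v (betahat - b)"
  have n: "0 < n" by (simp add: n_def)
  have signal: "u \<bullet> w - eps \<bullet> w \<le> n * (e * lam_tilde * A - e * lam_star * B)"
    using signal_inner_le[OF wd, of b] by (simp only: n_def e_def A_def B_def u_def w_def)
  have noise: "eps \<bullet> w \<le> n * (e * lm * (A + B))"
  proof -
    have b: "b \<in> coordsub S" using sb by (simp add: coordsub_iff_supp)
    then have "restr S (betahat - b) = restr S betahat - b"
      and "restr (- S) (betahat - b) = restr (- S) betahat"
      by (simp_all add: restr_diff restr_coordsub_self restr_coordsub_disjoint)
    then show ?thesis
      using inner_noise_le_lam_m[OF Omega_norm wd eps_nz, of X "betahat - b"]
      by (simp add: w_def n_def e_def lm_def A_def B_def mult.assoc)
  qed
  define K where "K = e * lam_tilde * A - e * lam_star * B + e * lm * (A + B)"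
  have "n * K = n * (e * lam_tilde * A - e * lam_star * B) + n * (e * lm * (A + B))"
    by (simp only: K_def distrib_left)
  then have "u \<bullet> w \<le> n * K"
    using signal noise by linarith
  then have "u \<bullet> w / n \<le> K"
    using n by (simp add: pos_divide_le_eq mult.commute)
  moreover have "X *v (b - beta0) = u - w"
    by (simp add: u_def w_def algebra_simps)
  then have "nnorm u ^ 2 + nnorm w ^ 2 = nnorm (X *v (b - beta0)) ^ 2 + 2 * (u \<bullet> w / n)"
    unfolding n_def by (simp add: nnorm_diff_power2)
  moreover have "2 * e * (lam_tilde + lm) * A - 2 * e * (lam_star - lm) * B = 2 * K"
    by (simp add: K_def algebra_simps)
  ultimately show ?thesis
    unfolding e_def[symmetric] lm_def[symmetric] A_def[symmetric] B_def[symmetric]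
      u_def[symmetric] w_def[symmetric] by linarith
qed

lemma sharp_oracle_inequality:
  assumes wd: "wdec Omega S OSc" and sb: "supp b \<subseteq> S"
    and small: "3 * (1 + f) * lam_m X eps Omega S OSc < lam"
    and delta: "0 \<le> delta" "delta < 1"
  defines "lm \<equiv> lam_m X eps Omega S OSc"
  shows "ereal (nnorm (X *v (betahat - beta0))^2
           + 2 * delta * nnorm eps * ((lam_star + lm) * Omega (restr S betahat - b)
                                     + (lam_star - lm) * OSc (restr (- S) betahat)))
         \<le> ereal (nnorm (X *v (b - beta0))^2)
           + ereal (nnorm eps^2 * ((1 + delta) * (lam_tilde + lm))^2)
             * Gamma2 X Omega S OSc ((lam_tilde + lm) / (lam_star - lm) * ((1 + delta) / (1 - delta)))"
proof -
  \<comment> \<open>A local name for lam_star keeps the simplifier from expanding the abbreviation.\<close>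
  define ls where "ls = lam_star"
  define A where "A = Omega (restr S betahat - b)"
  define B where "B = OSc (restr (- S) betahat)"
  define L where "L = (lam_tilde + lm) / (ls - lm) * ((1 + delta) / (1 - delta))"
  define d where "d = delta_Omega X Omega S OSc L"
  have OSc: "norm_on (coordsub (- S)) OSc" using wd by (rule wdec_norm_on)
  have A: "0 \<le> A" using is_norm_nonneg[OF Omega_norm] by (simp add: A_def)
  have B: "0 \<le> B" using norm_on_nonneg[OF OSc restr_in_coordsub] by (simp add: B_def)
  have c2: "0 < ls - lm" using lam_m_less_lam_star[OF wd small] by (simp add: ls_def lm_def)
  have basic: "nnorm (X *v (betahat - beta0))^2 + nnorm (X *v (betahat - b))^2 + 2 * nnorm eps * (ls - lm) * B
      \<le> nnorm (X *v (b - beta0))^2 + 2 * nnorm eps * (lam_tilde + lm) * A"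
    using basic_inequality[OF wd sb] by (simp only: ls_def lm_def A_def B_def)
  have cone: "d \<le> ereal (nnorm (X *v (betahat - b)) / A)"
    if "0 < A" "B \<le> (lam_tilde + lm) / (ls - lm) * ((1 + delta) / (1 - delta)) * A"
  proof -
    have "OSc (restr (- S) betahat) \<le> L * Omega (restr S betahat - b)"
      using that(2) by (simp only: A_def B_def L_def)
    from delta_Omega_le_diff[OF Omega_norm wd sb _ this, of X] that(1)
    show ?thesis by (simp only: A_def d_def)
  qed
  have main: "ereal (nnorm (X *v (betahat - beta0))^2 + 2 * delta * nnorm eps * ((lam_tilde + lm) * A + (ls - lm) * B))
      \<le> ereal (nnorm (X *v (b - beta0))^2) + ereal (nnorm eps^2 * ((1 + delta) * (lam_tilde + lm))^2) * inverse (d * d)"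
    by (rule oracle_bound_of_basic_inequality[OF nnorm_nonneg c2 delta A B basic _ cone])
      (simp add: d_def delta_Omega_nonneg)
  have "(ls + lm) * A \<le> (lam_tilde + lm) * A"
    using lam_star_le_lam_tilde A by (intro mult_right_mono) (simp_all add: ls_def)
  moreover have "0 \<le> 2 * delta * nnorm eps" using delta nnorm_nonneg[of eps] by simp
  ultimately have "ereal (nnorm (X *v (betahat - beta0))^2 + 2 * delta * nnorm eps * ((ls + lm) * A + (ls - lm) * B))
      \<le> ereal (nnorm (X *v (betahat - beta0))^2 + 2 * delta * nnorm eps * ((lam_tilde + lm) * A + (ls - lm) * B))"
    by (simp add: mult_left_mono)
  also note main
  finally show ?thesis
    unfolding Gamma2_def ls_def[symmetric] A_def[symmetric] B_def[symmetric] L_def[symmetric] d_def[symmetric] .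
qed

lemma prediction_oracle_inequality:
  assumes wd: "wdec Omega S OSc" and sb: "supp b \<subseteq> S"
    and small: "3 * (1 + f) * lam_m X eps Omega S OSc < lam"
    and delta: "0 \<le> delta" "delta < 1"
  defines "lm \<equiv> lam_m X eps Omega S OSc"
  shows "ereal (nnorm (X *v (betahat - beta0))^2)
         \<le> ereal (nnorm (X *v (b - beta0))^2)
           + ereal (nnorm eps^2 * (1 + delta)^2 * (lam_tilde + lm)^2)
             * Gamma2 X Omega S OSc ((lam_tilde + lm) / (lam_star - lm) * ((1 + delta) / (1 - delta)))"
proof -
  have "0 \<le> 2 * delta * nnorm eps * ((lam_star + lm) * Omega (restr S betahat - b)
                                      + (lam_star - lm) * OSc (restr (- S) betahat))"
    using delta lam_m_nonneg[OF Omega_norm, of X eps S OSc] lam_m_less_lam_star[OF wd small]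
      is_norm_nonneg[OF Omega_norm] norm_on_nonneg[OF wdec_norm_on[OF wd] restr_in_coordsub]
    by (intro mult_nonneg_nonneg add_nonneg_nonneg) (simp_all add: lm_def nnorm_nonneg)
  then have "ereal (nnorm (X *v (betahat - beta0))^2)
      \<le> ereal (nnorm (X *v (betahat - beta0))^2
           + 2 * delta * nnorm eps * ((lam_star + lm) * Omega (restr S betahat - b)
                                     + (lam_star - lm) * OSc (restr (- S) betahat)))"
    by simp
  also note sharp_oracle_inequality[OF wd sb small delta, folded lm_def]
  also have "nnorm eps^2 * ((1 + delta) * (lam_tilde + lm))^2 = nnorm eps^2 * (1 + delta)^2 * (lam_tilde + lm)^2"
    by (simp add: power_mult_distrib)
  finally show ?thesis .
qed

lemma estimation_oracle_inequality:
  assumes wd: "wdec Omega S OSc" and sb: "supp b \<subseteq> S"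
    and small: "3 * (1 + f) * lam_m X eps Omega S OSc < lam"
    and delta: "0 < delta" "delta < 1"
  defines "lm \<equiv> lam_m X eps Omega S OSc"
  shows "ereal (Omega (restr S betahat - b) + OSc (restr (- S) betahat))
         \<le> ereal (1 / (2 * delta * nnorm eps) * (nnorm (X *v (b - beta0))^2 / (lam_star - lm)))
           + ereal ((1 + delta)^2 * nnorm eps / (2 * delta) * ((lam_tilde + lm)^2 / (lam_star - lm)))
             * Gamma2 X Omega S OSc ((lam_tilde + lm) / (lam_star - lm) * ((1 + delta) / (1 - delta)))"
proof -
  define A where "A = Omega (restr S betahat - b)"
  define B where "B = OSc (restr (- S) betahat)"
  define e where "e = nnorm eps"
  define c where "c = 2 * delta * e * (lam_star - lm)"
  define C where "C = e^2 * ((1 + delta) * (lam_tilde + lm))^2"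
  have A: "0 \<le> A" using is_norm_nonneg[OF Omega_norm] by (simp add: A_def)
  have lm0: "0 \<le> lm" using lam_m_nonneg[OF Omega_norm] by (simp add: lm_def)
  have c2: "0 < lam_star - lm" using lam_m_less_lam_star[OF wd small] by (simp add: lm_def)
  have e: "0 < e" using eps_nnorm_pos by (simp add: e_def)
  have c: "0 < c" using delta e c2 by (simp add: c_def)
  have "0 < lam_tilde + lm" using lam_pos f_nonneg lm0 by (simp add: add_pos_nonneg)
  then have C: "0 < C" using e delta by (simp add: C_def)
  have "c * (A + B) \<le> 2 * delta * e * ((lam_star + lm) * A + (lam_star - lm) * B)"
  proof -
    have "(x - lm) * (A + B) \<le> (x + lm) * A + (x - lm) * B" for x
      using mult_nonneg_nonneg[OF lm0 A] by (simp add: algebra_simps)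
    then have "2 * delta * e * ((lam_star - lm) * (A + B))
        \<le> 2 * delta * e * ((lam_star + lm) * A + (lam_star - lm) * B)"
      using delta e by (intro mult_left_mono) simp_all
    then show ?thesis by (simp only: c_def mult.assoc)
  qed
  with sharp_oracle_inequality[OF wd sb small less_imp_le[OF delta(1)] delta(2),
      folded lm_def A_def B_def e_def, folded C_def]
  have "ereal (A + B) \<le> ereal (nnorm (X *v (b - beta0))^2 / c) + ereal (C / c)
      * Gamma2 X Omega S OSc ((lam_tilde + lm) / (lam_star - lm) * ((1 + delta) / (1 - delta)))"
    by (rule ereal_le_divide_of_add_le[OF _ _ zero_le_power2 c C Gamma2_nonneg])
  moreover have "nnorm (X *v (b - beta0))^2 / c
      = 1 / (2 * delta * e) * (nnorm (X *v (b - beta0))^2 / (lam_star - lm))"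
    by (simp add: c_def)
  moreover have "C / c = (1 + delta)^2 * e / (2 * delta) * ((lam_tilde + lm)^2 / (lam_star - lm))"
  proof -
    have "e^2 * ((1 + delta) * (lam_tilde + lm))^2 / (2 * delta * e * (x - lm))
        = (1 + delta)^2 * e / (2 * delta) * ((lam_tilde + lm)^2 / (x - lm))" if "0 < x - lm" for x
      using e delta that by (simp add: power2_eq_square field_simps)
    from this[OF c2] show ?thesis by (simp only: C_def c_def)
  qed
  ultimately show ?thesis by (simp add: A_def B_def e_def)
qed

end

theorem theorem1:
  fixes X :: "real^'p::finite^'n::finite" and beta0 betahat :: "real^'p"
    and eps Y :: "real^'n" and Omega :: "real^'p \<Rightarrow> real" and lam delta :: real
  assumes model: "Y = X *v beta0 + eps"
    and eps_nz: "eps \<noteq> 0"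
    and Omega_norm: "is_norm Omega"
    and lam_pos: "lam > 0"
    and betahat_min: "\<forall>b. nnorm (Y - X *v betahat) + lam * Omega betahat
                          \<le> nnorm (Y - X *v b) + lam * Omega b"
    and assI1: "\<forall>b. X *v b = Y \<longrightarrow> nnorm eps < Omega b"
    and assI2: "lam0 X eps Omega / lam * (1 + 2 * f_q lam Omega beta0 eps) < 1"
    and delta0: "0 \<le> delta" and delta1: "delta < 1"
  shows
   "let f = f_q lam Omega beta0 eps;
        l0 = lam0 X eps Omega;
        lstar = lam * (1 - l0 / lam * (1 + 2 * f)) / (f + 2);
        ltil = lam * (1 + f);
        LL = (\<lambda>lm. (ltil + lm) / (lstar - lm) * ((1 + delta) / (1 - delta)))
    in
    (\<forall>S OSc b. wdec Omega S OSc \<and> supp b \<subseteq> S \<and> 3 * (1 + f) * lam_m X eps Omega S OSc < lam \<longrightarrow>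
       (let lm = lam_m X eps Omega S OSc in
        ereal (nnorm (X *v (betahat - beta0))^2
               + 2 * delta * nnorm eps * ((lstar + lm) * Omega (restr S betahat - b)
                                         + (lstar - lm) * OSc (restr (- S) betahat)))
        \<le> ereal (nnorm (X *v (b - beta0))^2)
          + ereal (nnorm eps^2 * ((1 + delta) * (ltil + lm))^2) * Gamma2 X Omega S OSc (LL lm)))
    \<and>
    (\<forall>N bs Ss.
       let lmS = (\<lambda>S. lam_m X eps Omega S (N S));
           obj = (\<lambda>S b. ereal (nnorm (X *v (b - beta0))^2)
                        + ereal (nnorm eps^2 * ((1 + delta) * (ltil + lmS S))^2)
                          * Gamma2 X Omega S (N S) (LL (lmS S)))
       in
       (\<forall>S. allowed Omega S \<longrightarrow> wdec Omega S (N S)) \<and>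
       (\<forall>S. allowed Omega S \<longrightarrow> supp (bs S) \<subseteq> S \<and>
              (\<forall>b. supp b \<subseteq> S \<longrightarrow> obj S (bs S) \<le> obj S b)) \<and>
       allowed Omega Ss \<and>
       (\<forall>S. allowed Omega S \<longrightarrow> obj Ss (bs Ss) \<le> obj S (bs S)) \<and>
       3 * (1 + f) * lmS Ss < lam
       \<longrightarrow>
       (let lm = lmS Ss; bstar = bs Ss; G = Gamma2 X Omega Ss (N Ss) (LL lm) in
        ereal (nnorm (X *v (betahat - beta0))^2)
          \<le> ereal (nnorm (X *v (bstar - beta0))^2)
            + ereal (nnorm eps^2 * (1 + delta)^2 * (ltil + lm)^2) * G
        \<and>
        (delta > 0 \<longrightarrow>
          ereal (Omega (restr Ss betahat - bstar) + N Ss (restr (- Ss) betahat))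
            \<le> ereal (1 / (2 * delta * nnorm eps) * (nnorm (X *v (bstar - beta0))^2 / (lstar - lm)))
              + ereal ((1 + delta)^2 * nnorm eps / (2 * delta) * ((ltil + lm)^2 / (lstar - lm))) * G)))"
proof -
  interpret sqrt_lasso X beta0 betahat eps Y Omega lam
    by unfold_locales (fact model eps_nz Omega_norm lam_pos betahat_min assI2)+
  show ?thesis
    unfolding Let_def
    apply (intro conjI allI impI)
    subgoal for S OSc b
      using sharp_oracle_inequality[of S OSc b delta] delta0 delta1 by blast
    subgoal for N bs Ss
      using prediction_oracle_inequality[of Ss "N Ss" "bs Ss" delta] delta0 delta1 by blast
    subgoal for N bs Ss
      using estimation_oracle_inequality[of Ss "N Ss" "bs Ss" delta] delta1 by blast
    done
qed

end
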